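(* There exists an absolute constant $c > 0$ so that asymptotically almost surely (i.e., with probability tending to $1$ as $n\to\infty$) every triangle $T(X)$ contains a vertex of $\mathcal{G}_2(n,r)$, provided $r^5 > c \frac{\log n}{n}$.
   Context: $\mathcal{G}_2(n,r)$ is the random geometric graph with vertex set $[n]$ in which $n$ points are chosen uniformly at random and independently from $[0,1]^2$, two vertices being adjacent if their Euclidean distance is at most $r$, where $r=r(n)$ may depend on $n$. Let $O$ be the center of $[0,1]^2$. For each point $X$ of the unit square whose distance from $O$ is at least $r/2$ and whose distance from the boundary of the square is at least $r^2/10^3$, $T(X)$ is the isosceles triangle defined as follows: one vertex is $X$; the segment of length $r^2/100$ on the line $OX$ starting at $X$ and going towards $O$ is the height of $T(X)$; the base is orthogonal to this height and has length $r^3/10^5$. *)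

theory Defs
  imports "HOL-Probability.Probability"
begin

definition unit_sq :: "(real \<times> real) set" where
  "unit_sq = {0..1} \<times> {0..1}"

definition centre :: "real \<times> real" where
  "centre = (1/2, 1/2)"

definition bdist :: "real \<times> real \<Rightarrow> real" where
  "bdist X = min (min (fst X) (1 - fst X)) (min (snd X) (1 - snd X))"

text \<open>Points X for which T(X) is defined (for radius r).\<close>
definition admissible :: "real \<Rightarrow> real \<times> real \<Rightarrow> bool" where
  "admissible r X \<longleftrightarrow> X \<in> unit_sq \<and> dist X centre \<ge> r / 2 \<and> bdist X \<ge> r^2 / 10^3"

text \<open>The closed isosceles triangle T(X): apex X, height of length r^2/100 along
  the segment from X towards O, base orthogonal to the height of length r^3/10^5.\<close>
definition tri :: "real \<Rightarrow> real \<times> real \<Rightarrow> (real \<times> real) set" where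
  "tri r X =
    (let u = (1 / dist X centre) *\<^sub>R (centre - X);
         v = (- snd u, fst u);
         M = X + (r^2 / 100) *\<^sub>R u;
         b = r^3 / 10^5
     in convex hull {X, M + (b/2) *\<^sub>R v, M - (b/2) *\<^sub>R v})"

text \<open>The probability space of n independent uniform points in the unit square
  (vertex i of G_2(n,r) is placed at \<omega> i).\<close>
definition rgg_space :: "nat \<Rightarrow> (nat \<Rightarrow> real \<times> real) measure" where
  "rgg_space n = PiM {..<n} (\<lambda>_. uniform_measure lborel unit_sq)"

end

theory Submission
  imports Defs
begin

text \<open>
  Write \<open>h = r^2/100\<close> and \<open>b = r^3/10^5\<close> for the height and base of \<open>T(X)\<close>, and use the
  orthonormal frame of \<open>T(X)\<close>: the axis \<open>u\<close> from \<open>X\<close> towards \<open>O\<close> and its normal.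
  The points of height between \<open>h/2\<close> and \<open>h\<close> and lateral offset at most \<open>b/4\<close> form a core
  of \<open>T(X)\<close> that lies in the unit square. Moving the apex by \<open>\<delta> = b/16\<close> turns the frame by
  \<open>O(\<delta>/r)\<close> only, so a thin probe parallelogram of dimensions about \<open>h \<times> b\<close> placed at
  height \<open>3h/4\<close> above any \<open>Y\<close> with \<open>dist X Y \<le> \<delta>\<close> lies in the core of \<open>T(X)\<close>.
  Hence it suffices that the probes at the \<open>O(r\<^sup>-\<^sup>6) = O(n\<^sup>2)\<close> points of a \<open>\<delta>\<close>-grid all
  contain a vertex. A probe has area at least \<open>r^5/(64\<cdot>10^7)\<close>, so it misses all \<open>n\<close>
  vertices with probability at most \<open>n\<^sup>-\<^sup>3\<close> once \<open>r^5 > 192\<cdot>10^7 log n / n\<close>, and the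
  union bound leaves a failure probability \<open>O(1/n)\<close>.
\<close>

section \<open>Orthonormal frames in the plane\<close>

definition perp :: "real \<times> real \<Rightarrow> real \<times> real" where
  "perp u = (- snd u, fst u)"

lemma inner_perp_self [simp]: "inner u (perp u) = 0"
  by (simp add: perp_def inner_prod_def)

lemma norm_perp [simp]: "norm (perp u) = norm u"
  by (simp add: perp_def norm_prod_def add.commute)

lemma inner_perp_perp [simp]: "inner (perp u) (perp w) = inner u w"
  by (simp add: perp_def inner_prod_def add.commute)

lemma perp_diff: "perp u - perp w = perp (u - w)"
  by (simp add: perp_def)

lemma frame_decomp:
  assumes "norm u = 1"
  shows "w = inner w u *\<^sub>R u + inner w (perp u) *\<^sub>R perp u"
proof -
  have n: "fst u ^ 2 + snd u ^ 2 = 1"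
    using assms by (simp add: norm_prod_def real_sqrt_eq_1_iff)
  show ?thesis
  proof (rule prod_eqI)
    show "fst w = fst (inner w u *\<^sub>R u + inner w (perp u) *\<^sub>R perp u)"
      using arg_cong[OF n, of "(*) (fst w)"]
      by (simp add: perp_def inner_prod_def power2_eq_square algebra_simps)
    show "snd w = snd (inner w u *\<^sub>R u + inner w (perp u) *\<^sub>R perp u)"
      using arg_cong[OF n, of "(*) (snd w)"]
      by (simp add: perp_def inner_prod_def power2_eq_square algebra_simps)
  qed
qed

lemma norm_le_frame_coords:
  assumes "norm u = 1"
  shows "norm w \<le> \<bar>inner w u\<bar> + \<bar>inner w (perp u)\<bar>"
proof -
  have "norm w = norm (inner w u *\<^sub>R u + inner w (perp u) *\<^sub>R perp u)"
    using frame_decomp[OF assms] by metis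
  also have "\<dots> \<le> \<bar>inner w u\<bar> + \<bar>inner w (perp u)\<bar>"
    using norm_triangle_ineq[of "inner w u *\<^sub>R u" "inner w (perp u) *\<^sub>R perp u"] assms by simp
  finally show ?thesis .
qed

lemma abs_inner_frame_le:
  assumes "norm u = 1" "norm e = 1"
  shows "\<bar>inner w u\<bar> * \<bar>inner u e\<bar> \<le> \<bar>inner w e\<bar> + \<bar>inner w (perp u)\<bar>"
proof -
  have "inner w e = inner w u * inner u e + inner w (perp u) * inner (perp u) e"
    by (subst frame_decomp[OF assms(1), of w]) (simp add: inner_add_left)
  moreover have "\<bar>inner (perp u) e\<bar> \<le> 1"
    using Cauchy_Schwarz_ineq2[of "perp u" e] assms by simp
  then have "\<bar>inner w (perp u) * inner (perp u) e\<bar> \<le> \<bar>inner w (perp u)\<bar>"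
    by (simp add: abs_mult mult_left_le)
  ultimately show ?thesis by (simp add: abs_mult[symmetric])
qed

lemma inner_frame_change:
  fixes q X Y u w :: "'a::real_inner"
  assumes "norm u = 1"
  shows "\<bar>inner (q - X) u - inner (q - Y) w\<bar> \<le> norm (q - Y) * norm (u - w) + dist X Y"
proof -
  have "inner (q - X) u - inner (q - Y) w = inner (q - Y) (u - w) + inner (Y - X) u"
    by (simp add: inner_diff_left inner_diff_right)
  moreover have "\<bar>inner (q - Y) (u - w)\<bar> \<le> norm (q - Y) * norm (u - w)"
    by (rule Cauchy_Schwarz_ineq2)
  moreover have "\<bar>inner (Y - X) u\<bar> \<le> dist X Y"
    using Cauchy_Schwarz_ineq2[of "Y - X" u] assms by (simp add: dist_norm norm_minus_commute)
  ultimately show ?thesis by linarith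
qed

lemma norm_sgn_diff_le:
  fixes a b :: "'a::real_normed_vector"
  assumes "a \<noteq> 0"
  shows "norm (sgn a - sgn b) \<le> 2 * norm (a - b) / norm a"
proof (cases "b = 0")
  case True
  then show ?thesis using assms by (simp add: norm_sgn)
next
  case False
  have na: "norm a > 0" and nb: "norm b > 0" using assms False by simp_all
  have "sgn a - sgn b = (1 / norm a) *\<^sub>R (a - b) + (1 / norm a - 1 / norm b) *\<^sub>R b"
    by (simp add: sgn_div_norm divide_inverse algebra_simps)
  then have "norm (sgn a - sgn b) \<le> norm (a - b) / norm a + \<bar>1 / norm a - 1 / norm b\<bar> * norm b"
    using norm_triangle_ineq[of "(1 / norm a) *\<^sub>R (a - b)" "(1 / norm a - 1 / norm b) *\<^sub>R b"]
    by simp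
  also have "\<bar>1 / norm a - 1 / norm b\<bar> * norm b = \<bar>norm b - norm a\<bar> / norm a"
    using na nb by (simp add: abs_divide field_simps)
  also have "\<bar>norm b - norm a\<bar> \<le> norm (a - b)"
    by (metis norm_triangle_ineq3 norm_minus_commute)
  finally show ?thesis using na by (simp add: divide_right_mono add_divide_distrib[symmetric])
qed

section \<open>The triangles\<close>

lemma mem_convex_hull_isosceles:
  fixes X u v :: "'a::real_vector"
  assumes "0 < H" "0 < b" "0 \<le> s" "s \<le> H" "\<bar>t\<bar> \<le> b * s / H"
  shows "X + s *\<^sub>R u + t *\<^sub>R v \<in> convex hull {X, X + H *\<^sub>R u + b *\<^sub>R v, X + H *\<^sub>R u - b *\<^sub>R v}"
proof -
  define \<beta> where "\<beta> = s / (2*H) + t / (2*b)"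
  define \<gamma> where "\<gamma> = s / (2*H) - t / (2*b)"
  have tb: "\<bar>t / (2*b)\<bar> \<le> s / (2*H)"
    using assms by (simp add: abs_divide field_simps)
  have c: "0 \<le> 1 - s/H" "0 \<le> \<beta>" "0 \<le> \<gamma>" "(1 - s/H) + \<beta> + \<gamma> = 1"
    using assms tb unfolding abs_le_iff by (auto simp: \<beta>_def \<gamma>_def)
  have coeffs: "(\<beta> + \<gamma>) * H = s" "(\<beta> - \<gamma>) * b = t"
    using assms by (simp_all add: \<beta>_def \<gamma>_def field_simps)
  have "X + s *\<^sub>R u + t *\<^sub>R v
      = ((1 - s/H) + \<beta> + \<gamma>) *\<^sub>R X + ((\<beta> + \<gamma>) * H) *\<^sub>R u + ((\<beta> - \<gamma>) * b) *\<^sub>R v"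
    by (simp only: c(4) coeffs scaleR_one)
  also have "\<dots> = (1 - s/H) *\<^sub>R X + \<beta> *\<^sub>R (X + H *\<^sub>R u + b *\<^sub>R v) + \<gamma> *\<^sub>R (X + H *\<^sub>R u - b *\<^sub>R v)"
    by (simp add: algebra_simps)
  finally have "X + s *\<^sub>R u + t *\<^sub>R v = \<dots>" .
  moreover note c
  ultimately show ?thesis unfolding convex_hull_3 by blast
qed

lemma convex_hull_3_perturb:
  fixes a b c a' b' c' :: "'a::real_normed_vector"
  assumes "x' \<in> convex hull {a', b', c'}"
  obtains x where "x \<in> convex hull {a, b, c}"
    and "dist x' x \<le> max (dist a' a) (max (dist b' b) (dist c' c))"
proof -
  obtain \<alpha> \<beta> \<gamma> where w: "0 \<le> \<alpha>" "0 \<le> \<beta>" "0 \<le> \<gamma>" "\<alpha> + \<beta> + \<gamma> = 1"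
    and x': "x' = \<alpha> *\<^sub>R a' + \<beta> *\<^sub>R b' + \<gamma> *\<^sub>R c'"
    using assms unfolding convex_hull_3 by blast
  define m where "m = max (dist a' a) (max (dist b' b) (dist c' c))"
  define x where "x = \<alpha> *\<^sub>R a + \<beta> *\<^sub>R b + \<gamma> *\<^sub>R c"
  have "x \<in> convex hull {a, b, c}" unfolding convex_hull_3 x_def using w by blast
  moreover have "dist x' x \<le> m"
  proof -
    have "dist x' x = norm (\<alpha> *\<^sub>R (a' - a) + \<beta> *\<^sub>R (b' - b) + \<gamma> *\<^sub>R (c' - c))"
      by (simp add: x' x_def dist_norm algebra_simps)
    also have "\<dots> \<le> norm (\<alpha> *\<^sub>R (a' - a)) + norm (\<beta> *\<^sub>R (b' - b)) + norm (\<gamma> *\<^sub>R (c' - c))"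
      by (rule norm_triangle_le) (rule add_mono[OF norm_triangle_ineq order_refl])
    also have "\<dots> = \<alpha> * dist a' a + \<beta> * dist b' b + \<gamma> * dist c' c"
      using w by (simp add: dist_norm)
    also have "\<dots> \<le> \<alpha> * m + \<beta> * m + \<gamma> * m"
      using w by (intro add_mono mult_left_mono) (auto simp: m_def)
    finally show ?thesis using w(4) by (simp add: distrib_right[symmetric])
  qed
  ultimately show ?thesis using that by (simp add: m_def)
qed

definition towards_centre :: "real \<times> real \<Rightarrow> real \<times> real" where
  "towards_centre X = sgn (centre - X)"

lemma towards_centre_eq: "towards_centre X = (1 / dist X centre) *\<^sub>R (centre - X)"
  unfolding towards_centre_def sgn_div_norm dist_norm
  by (simp add: norm_minus_commute divide_inverse_commute)

lemma norm_towards_centre: "X \<noteq> centre \<Longrightarrow> norm (towards_centre X) = 1"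
  by (simp add: towards_centre_def norm_sgn)

lemma towards_centre_lipschitz:
  assumes "X \<noteq> centre"
  shows "norm (towards_centre X - towards_centre Y) \<le> 2 * dist X Y / dist X centre"
  using norm_sgn_diff_le[of "centre - X" "centre - Y"] assms
  by (simp add: towards_centre_def dist_norm norm_minus_commute)

lemma tri_eq:
  "tri r X = convex hull {X,
     X + (r^2/100) *\<^sub>R towards_centre X + (r^3/10^5/2) *\<^sub>R perp (towards_centre X),
     X + (r^2/100) *\<^sub>R towards_centre X - (r^3/10^5/2) *\<^sub>R perp (towards_centre X)}"
  unfolding tri_def Let_def towards_centre_eq perp_def ..

lemma compact_tri: "compact (tri r X)"
  unfolding tri_eq by (intro compact_convex_hull finite_imp_compact) simp

lemma tri_borel [measurable]: "tri r X \<in> sets borel"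
  by (intro borel_closed compact_imp_closed compact_tri)

lemma eventually_not_in_tri:
  assumes "X \<noteq> centre" "p \<notin> tri r X"
  shows "\<forall>\<^sub>F X' in nhds X. p \<notin> tri r X'"
proof -
  define V where "V = (\<lambda>\<sigma> X. X + (r^2/100) *\<^sub>R towards_centre X + \<sigma> *\<^sub>R perp (towards_centre X))"
  define b where "b = r^3/10^5/2"
  have tri: "tri r X' = convex hull {X', V b X', V (-b) X'}" for X'
    by (simp add: tri_eq V_def b_def)
  have "tri r X \<noteq> {}" unfolding tri by simp
  moreover have "closed (tri r X)" by (intro compact_imp_closed compact_tri)
  ultimately have \<delta>: "0 < infdist p (tri r X)"
    using assms(2) by (intro infdist_pos_not_in_closed)
  have "dist X centre \<noteq> 0" using assms(1) by simp
  then have V: "((\<lambda>X'. V \<sigma> X') \<longlongrightarrow> V \<sigma> X) (nhds X)" for \<sigma>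
    unfolding V_def towards_centre_eq perp_def by (intro tendsto_intros filterlim_ident) auto
  have "\<forall>\<^sub>F X' in nhds X. dist X' X < infdist p (tri r X)
      \<and> dist (V b X') (V b X) < infdist p (tri r X) \<and> dist (V (-b) X') (V (-b) X) < infdist p (tri r X)"
    using \<delta> by (intro eventually_conj tendstoD[OF filterlim_ident] tendstoD[OF V])
  then show ?thesis
  proof eventually_elim
    case (elim X')
    show "p \<notin> tri r X'"
    proof
      assume "p \<in> tri r X'"
      then obtain x where "x \<in> tri r X"
        and "dist p x \<le> max (dist X' X) (max (dist (V b X') (V b X)) (dist (V (-b) X') (V (-b) X)))"
        unfolding tri by (rule convex_hull_3_perturb)
      then show False using elim infdist_le[of x "tri r X" p] by (simp add: max_def split: if_splits)
    qed
  qed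
qed

lemma admissible_ne_centre: "0 < r \<Longrightarrow> admissible r X \<Longrightarrow> X \<noteq> centre"
  by (auto simp: admissible_def)

lemma admissible_radius_le:
  assumes "admissible r X"
  shows "r \<le> 3/2"
proof -
  have "\<bar>fst X - 1/2\<bar> \<le> 1/2" "\<bar>snd X - 1/2\<bar> \<le> 1/2"
    unfolding abs_le_iff using assms by (auto simp: admissible_def unit_sq_def)
  then have "(fst X - 1/2)^2 \<le> (1/2)^2" "(snd X - 1/2)^2 \<le> (1/2)^2"
    by (simp_all add: abs_le_square_iff flip: abs_le_square_iff[of _ "1/2"])
  then have "(fst X - 1/2)^2 + (snd X - 1/2)^2 \<le> (3/4)^2" by (simp add: power_divide)
  then have "sqrt ((fst X - 1/2)^2 + (snd X - 1/2)^2) \<le> sqrt ((3/4)^2)"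
    by (rule real_sqrt_le_mono)
  then have "dist X centre \<le> 3/4"
    by (simp add: dist_prod_def dist_real_def centre_def)
  then show ?thesis using assms by (simp add: admissible_def)
qed

lemma near_admissible_ne_centre:
  assumes r: "0 < r" "r \<le> 3/2" and X: "admissible r X" and XY: "dist X Y \<le> r^3/(16*10^5)"
  shows "Y \<noteq> centre"
proof
  assume "Y = centre"
  have "r * r \<le> 2 * 2" using r by (intro mult_mono) auto
  then have "r * (r * r) \<le> r * (4 * 10^5)" using r by (intro mult_left_mono) auto
  then have "dist X Y \<le> r/4" using XY by (simp add: power3_eq_cube)
  moreover have "r/2 \<le> dist X centre" using X by (simp add: admissible_def)
  ultimately show False using \<open>Y = centre\<close> r by simp
qed

lemma towards_centre_near:
  assumes "0 < r" "admissible r X" "dist X Y \<le> \<delta>"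
  shows "norm (towards_centre X - towards_centre Y) \<le> 4 * \<delta> / r"
proof -
  have "r/2 \<le> dist X centre" using assms(2) by (simp add: admissible_def)
  have "norm (towards_centre X - towards_centre Y) \<le> 2 * dist X Y / dist X centre"
    by (rule towards_centre_lipschitz[OF admissible_ne_centre[OF assms(1,2)]])
  also have "\<dots> \<le> 2 * \<delta> / (r/2)"
    using assms \<open>r/2 \<le> dist X centre\<close> by (intro frac_le) (auto intro: order_trans[OF zero_le_dist])
  finally show ?thesis by simp
qed

section \<open>The core of a triangle\<close>

definition tri_core :: "real \<Rightarrow> real \<times> real \<Rightarrow> (real \<times> real) set" where
  "tri_core r X = {q. r^2/200 \<le> inner (q - X) (towards_centre X)
                   \<and> inner (q - X) (towards_centre X) \<le> r^2/100
                   \<and> \<bar>inner (q - X) (perp (towards_centre X))\<bar> \<le> r^3/(4*10^5)}"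

lemma tri_core_subset_tri:
  assumes "X \<noteq> centre" "0 < r"
  shows "tri_core r X \<subseteq> tri r X"
proof
  fix q assume q: "q \<in> tri_core r X"
  define u where "u = towards_centre X"
  define s where "s = inner (q - X) u"
  define t where "t = inner (q - X) (perp u)"
  have q_eq: "q = X + s *\<^sub>R u + t *\<^sub>R perp u"
    using frame_decomp[OF norm_towards_centre[OF assms(1)], of "q - X"]
    by (simp add: s_def t_def u_def algebra_simps)
  have s: "r^2/200 \<le> s" "s \<le> r^2/100" using q by (simp_all add: tri_core_def s_def u_def)
  have "1/2 \<le> s / (r^2/100)" using s assms(2) by (simp add: field_simps)
  have "\<bar>t\<bar> \<le> r^3/10^5/2 * (1/2)" using q by (simp add: tri_core_def t_def u_def)
  also have "\<dots> \<le> r^3/10^5/2 * (s / (r^2/100))"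
    using \<open>1/2 \<le> s / (r^2/100)\<close> assms(2) by (intro mult_left_mono) auto
  finally have "\<bar>t\<bar> \<le> r^3/10^5/2 * s / (r^2/100)" by simp
  then have "X + s *\<^sub>R u + t *\<^sub>R perp u \<in> tri r X"
    unfolding tri_eq u_def[symmetric] using s assms(2)
    by (intro mem_convex_hull_isosceles) auto
  then show "q \<in> tri r X" using q_eq by simp
qed

lemma segment_to_centre_in_shrunk_square:
  assumes "X \<in> unit_sq" "\<epsilon> \<le> bdist X" "\<epsilon> \<le> 1/2" "0 \<le> c" "c \<le> 1"
  shows "X + c *\<^sub>R (centre - X) \<in> {\<epsilon>..1 - \<epsilon>} \<times> {\<epsilon>..1 - \<epsilon>}"
proof -
  have "X \<in> {\<epsilon>..1 - \<epsilon>} \<times> {\<epsilon>..1 - \<epsilon>}" "centre \<in> {\<epsilon>..1 - \<epsilon>} \<times> {\<epsilon>..1 - \<epsilon>}"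
    using assms by (auto simp: bdist_def centre_def unit_sq_def)
  then have "(1 - c) *\<^sub>R X + c *\<^sub>R centre \<in> {\<epsilon>..1 - \<epsilon>} \<times> {\<epsilon>..1 - \<epsilon>}"
    using assms(4,5) by (intro convexD convex_Times) auto
  then show ?thesis by (simp add: algebra_simps)
qed

lemma shrunk_square_plus_small:
  assumes "P \<in> {\<epsilon>..1 - \<epsilon>} \<times> {\<epsilon>..1 - \<epsilon>}" "norm w \<le> \<epsilon>"
  shows "P + w \<in> unit_sq"
proof -
  have "\<bar>fst w\<bar> \<le> \<epsilon>" "\<bar>snd w\<bar> \<le> \<epsilon>"
    using assms(2) norm_fst_le[of "fst w" "snd w"] norm_snd_le[of "snd w" "fst w"] by simp_all
  then show ?thesis using assms(1) by (cases w) (auto simp: unit_sq_def abs_le_iff)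
qed

lemma tri_core_subset_unit_sq:
  assumes r: "0 < r" "r \<le> 3/2" and X: "admissible r X"
  shows "tri_core r X \<subseteq> unit_sq"
proof
  fix q assume q: "q \<in> tri_core r X"
  define D where "D = dist X centre"
  define u where "u = towards_centre X"
  define s where "s = inner (q - X) u"
  define t where "t = inner (q - X) (perp u)"
  have D: "r/2 \<le> D" "0 < D" using X r by (auto simp: admissible_def D_def)
  then have Xc: "X \<noteq> centre" by (auto simp: D_def)
  have "r * r \<le> (3/2) * (3/2)" using r by (intro mult_mono) auto
  then have \<epsilon>: "r^2/10^3 \<le> 1/2" by (simp add: power2_eq_square)
  have "r * r^2 \<le> 400 * r^2" using r by (intro mult_right_mono) auto
  then have \<epsilon>': "r^3/(4*10^5) \<le> r^2/10^3" by (simp add: power3_eq_cube power2_eq_square)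
  have "r * r \<le> 50 * r" using r by (intro mult_right_mono) auto
  then have H: "r^2/100 \<le> r/2" by (simp add: power2_eq_square)
  have "q = X + s *\<^sub>R u + t *\<^sub>R perp u"
    using frame_decomp[OF norm_towards_centre[OF Xc], of "q - X"]
    by (simp add: s_def t_def u_def algebra_simps)
  moreover have "s *\<^sub>R u = (s/D) *\<^sub>R (centre - X)"
    by (simp add: u_def towards_centre_eq D_def)
  moreover have "X + (s/D) *\<^sub>R (centre - X) \<in> {r^2/10^3..1 - r^2/10^3} \<times> {r^2/10^3..1 - r^2/10^3}"
    using q D H r X \<epsilon>
    by (intro segment_to_centre_in_shrunk_square) (auto simp: admissible_def tri_core_def s_def u_def field_simps)
  moreover have "norm (t *\<^sub>R perp u) \<le> r^2/10^3"
    using q \<epsilon>' norm_towards_centre[OF Xc] by (simp add: tri_core_def t_def u_def)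
  ultimately show "q \<in> unit_sq"
    using shrunk_square_plus_small by (metis add.assoc)
qed

definition probe_centre :: "real \<Rightarrow> real \<times> real \<Rightarrow> real \<times> real" where
  "probe_centre r Y = Y + (3 * r^2/400) *\<^sub>R towards_centre Y"

lemma frame_coords_near_probe_centre:
  assumes "Y \<noteq> centre"
    and "\<bar>inner (q - probe_centre r Y) (towards_centre Y)\<bar> \<le> r^2/800"
    and "\<bar>inner (q - probe_centre r Y) (perp (towards_centre Y))\<bar> \<le> r^3/(8*10^5)"
  shows "5/8 * (r^2/100) \<le> inner (q - Y) (towards_centre Y)"
    and "inner (q - Y) (towards_centre Y) \<le> 7/8 * (r^2/100)"
    and "\<bar>inner (q - Y) (perp (towards_centre Y))\<bar> \<le> r^3/(8*10^5)"
proof -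
  define u where "u = towards_centre Y"
  have "inner u u = 1"
    by (metis assms(1) norm_towards_centre power2_norm_eq_inner one_power2 u_def)
  then have "inner (q - Y) u = 3/4 * (r^2/100) + inner (q - probe_centre r Y) u"
    by (simp add: probe_centre_def u_def[symmetric] inner_diff_left inner_add_left)
  moreover have "inner (q - Y) (perp u) = inner (q - probe_centre r Y) (perp u)"
    by (simp add: probe_centre_def u_def[symmetric] inner_diff_left inner_add_left)
  ultimately show "5/8 * (r^2/100) \<le> inner (q - Y) (towards_centre Y)"
    "inner (q - Y) (towards_centre Y) \<le> 7/8 * (r^2/100)"
    "\<bar>inner (q - Y) (perp (towards_centre Y))\<bar> \<le> r^3/(8*10^5)"
    using assms(2,3) by (auto simp: u_def abs_le_iff)
qed

lemma mem_tri_core_of_near_frame: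
  assumes r: "0 < r" "r \<le> 3/2" and X: "admissible r X"
    and XY: "dist X Y \<le> r^3/(16*10^5)"
    and q: "\<bar>inner (q - probe_centre r Y) (towards_centre Y)\<bar> \<le> r^2/800"
      "\<bar>inner (q - probe_centre r Y) (perp (towards_centre Y))\<bar> \<le> r^3/(8*10^5)"
  shows "q \<in> tri_core r X"
proof -
  define H where "H = r^2/100"
  define \<delta> where "\<delta> = r^3/(16*10^5)"
  define u where "u = towards_centre X"
  define u' where "u' = towards_centre Y"
  have "r^3 = r * r^2" by (simp add: power2_eq_square power3_eq_cube)
  also have "\<dots> \<le> 1000 * r^2" using r by (intro mult_right_mono) auto
  finally have \<delta>H: "16 * \<delta> \<le> H" by (simp add: \<delta>_def H_def)
  have "r * r \<le> 25 * r" using r by (intro mult_right_mono) auto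
  then have Hr: "H * (4 * \<delta> / r) \<le> \<delta>"
    using r by (simp add: H_def \<delta>_def power2_eq_square power3_eq_cube field_simps)
  have Yc: "Y \<noteq> centre" by (rule near_admissible_ne_centre[OF assms(1-4)])
  have nu: "norm u = 1" "norm u' = 1"
    using norm_towards_centre admissible_ne_centre[OF r(1) X] Yc by (simp_all add: u_def u'_def)
  have du: "norm (u - u') \<le> 4 * \<delta> / r"
    unfolding u_def u'_def by (rule towards_centre_near[OF r(1) X XY[folded \<delta>_def]])
  define s' where "s' = inner (q - Y) u'"
  define t' where "t' = inner (q - Y) (perp u')"
  have s': "5/8 * H \<le> s'" "s' \<le> 7/8 * H" and t': "\<bar>t'\<bar> \<le> 2 * \<delta>"
    using frame_coords_near_probe_centre[OF Yc q]
    by (simp_all add: s'_def t'_def u'_def H_def \<delta>_def)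
  have "norm (q - Y) \<le> \<bar>s'\<bar> + \<bar>t'\<bar>"
    using norm_le_frame_coords[OF nu(2)] by (simp add: s'_def t'_def)
  then have "norm (q - Y) \<le> H" using s' t' \<delta>H by auto
  then have "norm (q - Y) * norm (u - u') \<le> H * (4 * \<delta> / r)"
    using du by (intro mult_mono) (auto simp: H_def)
  then have frame: "norm (q - Y) * norm (u - u') + dist X Y \<le> 2 * \<delta>"
    using Hr XY by (simp add: \<delta>_def)
  have "\<bar>inner (q - X) u - s'\<bar> \<le> 2 * \<delta>"
    using inner_frame_change[OF nu(1), of q X Y u'] frame by (simp add: s'_def)
  moreover have "\<bar>inner (q - X) (perp u) - t'\<bar> \<le> 2 * \<delta>"
    using inner_frame_change[of "perp u" q X Y "perp u'"] nu(1) frame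
    by (simp add: t'_def perp_diff)
  ultimately have "H/2 \<le> inner (q - X) u" "inner (q - X) u \<le> H"
    "\<bar>inner (q - X) (perp u)\<bar> \<le> 4 * \<delta>"
    using s' t' \<delta>H by (auto simp: abs_le_iff)
  then show ?thesis by (simp add: tri_core_def u_def[symmetric] H_def \<delta>_def)
qed

section \<open>Probes\<close>

definition parallelogram ::
    "real \<times> real \<Rightarrow> real \<times> real \<Rightarrow> real \<times> real \<Rightarrow> real \<Rightarrow> real \<Rightarrow> (real \<times> real) set" where
  "parallelogram C e w \<alpha> \<beta> = {q. \<bar>inner (q - C) e\<bar> \<le> \<alpha> \<and> \<bar>inner (q - C) w\<bar> \<le> \<beta>}"

lemma parallelogram_borel [measurable]: "parallelogram C e w \<alpha> \<beta> \<in> sets borel"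
  unfolding parallelogram_def
  by (intro borel_closed closed_Collect_conj closed_Collect_le continuous_intros)

lemma parallelogram_swap:
  "parallelogram C e w \<alpha> \<beta> = prod.swap -` parallelogram (prod.swap C) (prod.swap e) (prod.swap w) \<alpha> \<beta>"
  by (auto simp: parallelogram_def inner_prod_def add.commute)

lemma emeasure_shear:
  assumes "0 \<le> \<alpha>" "0 \<le> \<beta>"
  shows "emeasure lborel {q :: real \<times> real. \<bar>fst q - a\<bar> \<le> \<alpha> \<and> \<bar>snd q - b - m * (fst q - a)\<bar> \<le> \<beta>}
       = ennreal (4 * \<alpha> * \<beta>)"
proof -
  let ?S = "{q :: real \<times> real. \<bar>fst q - a\<bar> \<le> \<alpha> \<and> \<bar>snd q - b - m * (fst q - a)\<bar> \<le> \<beta>}"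
  have "?S \<in> sets borel"
    by (intro borel_closed closed_Collect_conj closed_Collect_le continuous_intros)
  then have S: "?S \<in> sets (lborel \<Otimes>\<^sub>M lborel)" unfolding lborel_prod by simp
  have slice: "Pair x -` ?S = (if \<bar>x - a\<bar> \<le> \<alpha> then {b + m * (x - a) - \<beta> .. b + m * (x - a) + \<beta>} else {})" for x
    by (auto simp: abs_le_iff)
  have "emeasure lborel ?S = emeasure (lborel \<Otimes>\<^sub>M lborel) ?S" by (simp add: lborel_prod)
  also have "\<dots> = (\<integral>\<^sup>+x. emeasure lborel (Pair x -` ?S) \<partial>lborel)"
    by (rule lborel.emeasure_pair_measure_alt[OF S])
  also have "\<dots> = (\<integral>\<^sup>+x. ennreal (2 * \<beta>) * indicator {a - \<alpha> .. a + \<alpha>} x \<partial>lborel)"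
    by (intro nn_integral_cong, subst slice) (auto simp: indicator_def assms)
  also have "\<dots> = ennreal (2 * \<beta>) * emeasure lborel {a - \<alpha> .. a + \<alpha>}"
    by (rule nn_integral_cmult_indicator) simp
  also have "\<dots> = ennreal (4 * \<alpha> * \<beta>)"
    using assms by (simp add: ennreal_mult[symmetric])
  finally show ?thesis .
qed

lemma emeasure_lborel_swap:
  assumes "S \<in> sets (borel :: (real \<times> real) measure)"
  shows "emeasure lborel (prod.swap -` S) = emeasure lborel S"
proof -
  have "distr lborel lborel prod.swap = (lborel :: (real \<times> real) measure)"
    using lborel_pair.distr_pair_swap[symmetric]
    by (simp add: lborel_prod case_prod_unfold flip: prod.swap_def)
  moreover have "emeasure (distr lborel lborel prod.swap) S = emeasure lborel (prod.swap -` S)"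
    using assms by (subst emeasure_distr)
      (auto intro: borel_measurable_continuous_onI continuous_on_swap)
  ultimately show ?thesis by simp
qed

lemma emeasure_parallelogram_ge:
  assumes e: "e = (1, 0) \<or> e = (0, 1)"
    and w: "0 < \<bar>inner w (perp e)\<bar>" "\<bar>inner w (perp e)\<bar> \<le> 1"
    and "0 \<le> \<alpha>" "0 \<le> \<beta>"
  shows "ennreal (4 * \<alpha> * \<beta>) \<le> emeasure lborel (parallelogram C e w \<alpha> \<beta>)"
proof -
  have horizontal: "ennreal (4 * \<alpha> * \<beta>) \<le> emeasure lborel (parallelogram C (1, 0) w \<alpha> \<beta>)"
    if "0 < \<bar>snd w\<bar>" "\<bar>snd w\<bar> \<le> 1" for C w
  proof -
    let ?m = "- fst w / snd w"
    have "{q. \<bar>fst q - fst C\<bar> \<le> \<alpha> \<and> \<bar>snd q - snd C - ?m * (fst q - fst C)\<bar> \<le> \<beta>}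
        \<subseteq> parallelogram C (1, 0) w \<alpha> \<beta>"
    proof
      fix q assume "q \<in> {q. \<bar>fst q - fst C\<bar> \<le> \<alpha> \<and> \<bar>snd q - snd C - ?m * (fst q - fst C)\<bar> \<le> \<beta>}"
      then have q: "\<bar>fst q - fst C\<bar> \<le> \<alpha>" "\<bar>snd q - snd C - ?m * (fst q - fst C)\<bar> \<le> \<beta>"
        by auto
      have "inner (q - C) w = snd w * (snd q - snd C - ?m * (fst q - fst C))"
        using that(1) by (simp add: inner_prod_def field_simps)
      moreover have "\<bar>snd w\<bar> * \<bar>snd q - snd C - ?m * (fst q - fst C)\<bar>
          \<le> \<bar>snd q - snd C - ?m * (fst q - fst C)\<bar>"
        using that(2) by (intro mult_left_le_one_le) auto
      ultimately have "\<bar>inner (q - C) w\<bar> \<le> \<beta>" using q(2) by (simp add: abs_mult)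
      then show "q \<in> parallelogram C (1, 0) w \<alpha> \<beta>"
        using q(1) by (simp add: parallelogram_def inner_prod_def)
    qed
    from emeasure_mono[OF this, of lborel] show ?thesis
      using emeasure_shear[of \<alpha> \<beta> "fst C" "snd C" ?m] assms(4,5) by simp
  qed
  from e show ?thesis
  proof
    assume "e = (1, 0)"
    then show ?thesis using horizontal w by (simp add: perp_def inner_prod_def)
  next
    assume "e = (0, 1)"
    then show ?thesis
      using horizontal[of "prod.swap w" "prod.swap C"] w
      by (simp add: parallelogram_swap[of C] emeasure_lborel_swap perp_def inner_prod_def)
  qed
qed

definition dominant_axis :: "real \<times> real \<Rightarrow> real \<times> real" where
  "dominant_axis u = (if \<bar>snd u\<bar> \<le> \<bar>fst u\<bar> then (1, 0) else (0, 1))"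

lemma dominant_axis_cases: "dominant_axis u = (1, 0) \<or> dominant_axis u = (0, 1)"
  by (simp add: dominant_axis_def)

lemma norm_dominant_axis [simp]: "norm (dominant_axis u) = 1"
  by (simp add: dominant_axis_def norm_prod_def)

lemma inner_dominant_axis_ge:
  assumes "norm u = 1"
  shows "1/2 \<le> \<bar>inner u (dominant_axis u)\<bar>"
proof -
  have n: "fst u ^ 2 + snd u ^ 2 = 1"
    using assms by (simp add: norm_prod_def real_sqrt_eq_1_iff)
  show ?thesis
  proof (cases "\<bar>snd u\<bar> \<le> \<bar>fst u\<bar>")
    case True
    then have "snd u ^ 2 \<le> fst u ^ 2" by (simp add: abs_le_square_iff)
    then have "(1/2)^2 \<le> \<bar>fst u\<bar>^2" using n by (simp add: power_divide)
    then have "1/2 \<le> \<bar>fst u\<bar>" by (rule power2_le_imp_le) simp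
    then show ?thesis using True by (simp add: dominant_axis_def inner_prod_def)
  next
    case False
    then have "fst u ^ 2 \<le> snd u ^ 2" by (simp add: abs_le_square_iff)
    then have "(1/2)^2 \<le> \<bar>snd u\<bar>^2" using n by (simp add: power_divide)
    then have "1/2 \<le> \<bar>snd u\<bar>" by (rule power2_le_imp_le) simp
    then show ?thesis using False by (simp add: dominant_axis_def inner_prod_def)
  qed
qed

text \<open>
  A probe has one pair of sides parallel to the coordinate axis closer to the frame axis,
  rather than being a rectangle of the frame: its area is then a single Fubini computation.
\<close>

definition probe :: "real \<Rightarrow> real \<times> real \<Rightarrow> (real \<times> real) set" where
  "probe r Y = parallelogram (probe_centre r Y) (dominant_axis (towards_centre Y))
                 (perp (towards_centre Y)) (r^2/3200) (r^3/(8*10^5))"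

lemma probe_borel [measurable]: "probe r Y \<in> sets borel"
  by (simp add: probe_def)

lemma probe_subset_tri_core:
  assumes r: "0 < r" "r \<le> 3/2" and X: "admissible r X" and XY: "dist X Y \<le> r^3/(16*10^5)"
  shows "probe r Y \<subseteq> tri_core r X"
proof
  fix q assume q: "q \<in> probe r Y"
  define u where "u = towards_centre Y"
  define w where "w = q - probe_centre r Y"
  have nu: "norm u = 1"
    using norm_towards_centre near_admissible_ne_centre[OF assms] by (simp add: u_def)
  have e: "\<bar>inner w (dominant_axis u)\<bar> \<le> r^2/3200" and t: "\<bar>inner w (perp u)\<bar> \<le> r^3/(8*10^5)"
    using q by (simp_all add: probe_def parallelogram_def u_def w_def)
  have "\<bar>inner w u\<bar> * (1/2) \<le> \<bar>inner w u\<bar> * \<bar>inner u (dominant_axis u)\<bar>"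
    using inner_dominant_axis_ge[OF nu] by (intro mult_left_mono) auto
  also have "\<dots> \<le> r^2/3200 + r^3/(8*10^5)"
    using abs_inner_frame_le[OF nu norm_dominant_axis[of u], of w] e t by linarith
  also have "\<dots> \<le> r^2/1600"
  proof -
    have "r^3 = r * r^2" by (simp add: power2_eq_square power3_eq_cube)
    also have "\<dots> \<le> 250 * r^2" using r by (intro mult_right_mono) auto
    finally show ?thesis by simp
  qed
  finally have "\<bar>inner w u\<bar> \<le> r^2/800" by simp
  then show "q \<in> tri_core r X"
    using mem_tri_core_of_near_frame[OF assms] t by (simp add: u_def w_def)
qed

lemma probe_subset_tri_inter_unit_sq:
  assumes "0 < r" "r \<le> 3/2" "admissible r X" "dist X Y \<le> r^3/(16*10^5)"
  shows "probe r Y \<subseteq> tri r X \<inter> unit_sq"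
proof -
  have "probe r Y \<subseteq> tri_core r X" by (rule probe_subset_tri_core[OF assms])
  moreover have "tri_core r X \<subseteq> tri r X"
    by (rule tri_core_subset_tri[OF admissible_ne_centre[OF assms(1,3)] assms(1)])
  moreover have "tri_core r X \<subseteq> unit_sq" by (rule tri_core_subset_unit_sq[OF assms(1-3)])
  ultimately show ?thesis by blast
qed

lemma emeasure_probe_ge:
  assumes "0 < r" "Y \<noteq> centre"
  shows "ennreal (r^5/(64*10^7)) \<le> emeasure lborel (probe r Y)"
proof -
  define u where "u = towards_centre Y"
  have nu: "norm u = 1" using norm_towards_centre assms(2) by (simp add: u_def)
  have "\<bar>inner u (dominant_axis u)\<bar> \<le> 1"
    using Cauchy_Schwarz_ineq2[of u "dominant_axis u"] nu by simp
  moreover have "0 < \<bar>inner u (dominant_axis u)\<bar>"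
    using inner_dominant_axis_ge[OF nu] by linarith
  moreover have "4 * (r^2/3200) * (r^3/(8*10^5)) = r^5/(64*10^7)"
    by (simp add: power_add[symmetric])
  ultimately show ?thesis
    using emeasure_parallelogram_ge[OF dominant_axis_cases, where w="perp u" and
        \<alpha>="r^2/3200" and \<beta>="r^3/(8*10^5)" and C="probe_centre r Y"] assms(1)
    by (simp add: probe_def u_def)
qed

section \<open>Uniform random points\<close>

lemma unit_sq_borel [measurable]: "unit_sq \<in> sets borel"
  unfolding unit_sq_def by (intro borel_closed closed_Times) auto

lemma emeasure_unit_sq: "emeasure lborel unit_sq = 1"
proof -
  have "emeasure lborel unit_sq = emeasure (lborel \<Otimes>\<^sub>M lborel) ({0..1::real} \<times> {0..1::real})"
    by (simp add: lborel_prod unit_sq_def)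
  also have "\<dots> = 1"
    by (subst lborel.emeasure_pair_measure_Times) auto
  finally show ?thesis .
qed

abbreviation uniform_sq :: "(real \<times> real) measure" where
  "uniform_sq \<equiv> uniform_measure lborel unit_sq"

lemma prob_space_uniform_sq: "prob_space uniform_sq"
  by (rule prob_space_uniform_measure) (simp_all add: emeasure_unit_sq)

lemma measure_uniform_sq:
  assumes "S \<in> sets borel" "S \<subseteq> unit_sq"
  shows "measure uniform_sq S = measure lborel S"
proof -
  have "measure uniform_sq S = measure lborel (unit_sq \<inter> S) / measure lborel unit_sq"
    by (rule measure_uniform_measure) (simp_all add: emeasure_unit_sq assms)
  also have "\<dots> = measure lborel S"
    using assms emeasure_unit_sq by (simp add: Int_absorb1 measure_def)
  finally show ?thesis .
qed

lemma prob_space_rgg_space: "prob_space (rgg_space n)"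
  unfolding rgg_space_def by (intro prob_space_PiM prob_space_uniform_sq)

lemma some_vertex_in_sets:
  assumes "S \<in> sets borel"
  shows "{\<omega> \<in> space (rgg_space n). \<exists>i<n. \<omega> i \<in> S} \<in> sets (rgg_space n)"
proof -
  have "{\<omega> \<in> space (rgg_space n). \<exists>i<n. \<omega> i \<in> S}
      = (\<Union>i<n. (\<lambda>\<omega>. \<omega> i) -` S \<inter> space (rgg_space n))"
    by auto
  also have "\<dots> \<in> sets (rgg_space n)"
  proof (intro sets.finite_UN)
    fix i assume "i \<in> {..<n}"
    then have "(\<lambda>\<omega>. \<omega> i) \<in> measurable (rgg_space n) uniform_sq"
      unfolding rgg_space_def by (rule measurable_component_singleton)
    from measurable_sets[OF this, of S]
    show "(\<lambda>\<omega>. \<omega> i) -` S \<inter> space (rgg_space n) \<in> sets (rgg_space n)"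
      using assms by simp
  qed auto
  finally show ?thesis .
qed

lemma no_vertex_in_sets:
  assumes "S \<in> sets borel"
  shows "{\<omega> \<in> space (rgg_space n). \<forall>i<n. \<omega> i \<notin> S} \<in> sets (rgg_space n)"
proof -
  have "{\<omega> \<in> space (rgg_space n). \<forall>i<n. \<omega> i \<notin> S}
      = space (rgg_space n) - {\<omega> \<in> space (rgg_space n). \<exists>i<n. \<omega> i \<in> S}"
    by auto
  also have "\<dots> \<in> sets (rgg_space n)"
    by (rule sets.Diff[OF sets.top some_vertex_in_sets[OF assms]])
  finally show ?thesis .
qed

lemma prob_no_vertex_in:
  assumes S: "S \<in> sets borel" "S \<subseteq> unit_sq"
  shows "measure (rgg_space n) {\<omega> \<in> space (rgg_space n). \<forall>i<n. \<omega> i \<notin> S}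
       = (1 - measure lborel S) ^ n"
proof -
  interpret P: finite_product_prob_space "\<lambda>_. uniform_sq" "{..<n}"
    by (intro finite_product_prob_space.intro finite_product_sigma_finite.intro
        product_prob_space.intro product_sigma_finite.intro finite_product_sigma_finite_axioms.intro
        product_prob_space_axioms.intro)
      (auto intro: prob_space_uniform_sq prob_space_imp_sigma_finite)
  have "{\<omega> \<in> space (rgg_space n). \<forall>i<n. \<omega> i \<notin> S} = (\<Pi>\<^sub>E i\<in>{..<n}. - S)"
    unfolding rgg_space_def by (auto simp: space_PiM PiE_def Pi_def)
  then have "measure (rgg_space n) {\<omega> \<in> space (rgg_space n). \<forall>i<n. \<omega> i \<notin> S}
      = (\<Prod>i<n. measure uniform_sq (- S))"
    using S by (simp add: rgg_space_def P.prob_times)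
  also have "measure uniform_sq (- S) = 1 - measure lborel S"
    using prob_space.prob_compl[OF prob_space_uniform_sq, of S] S
    by (simp add: Compl_eq_Diff_UNIV measure_uniform_sq)
  finally show ?thesis by simp
qed

definition all_tri_hit :: "nat \<Rightarrow> real \<Rightarrow> (nat \<Rightarrow> real \<times> real) set" where
  "all_tri_hit n r =
     {\<omega> \<in> space (rgg_space n). \<forall>X. admissible r X \<longrightarrow> (\<exists>i<n. \<omega> i \<in> tri r X)}"

lemma all_tri_hit_sets:
  assumes "0 < r"
  shows "all_tri_hit n r \<in> sets (rgg_space n)"
proof -
  define K where "K = {X. admissible r X}"
  obtain D where D: "countable D" "D \<subseteq> K" "K \<subseteq> closure D"
    using separable[of K] by blast
  have "all_tri_hit n r = {\<omega> \<in> space (rgg_space n). \<forall>X\<in>D. \<exists>i<n. \<omega> i \<in> tri r X}"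
    (is "_ = ?R")
  proof
    show "all_tri_hit n r \<subseteq> ?R" using D(2) by (auto simp: all_tri_hit_def K_def)
  next
    show "?R \<subseteq> all_tri_hit n r"
    proof (rule subsetI, rule ccontr)
      fix \<omega> assume \<omega>: "\<omega> \<in> ?R" "\<omega> \<notin> all_tri_hit n r"
      then obtain X where X: "X \<in> K" "\<forall>i<n. \<omega> i \<notin> tri r X"
        by (auto simp: all_tri_hit_def K_def)
      have "X \<noteq> centre" using X(1) admissible_ne_centre[OF assms] by (simp add: K_def)
      then have "\<forall>\<^sub>F X' in nhds X. \<forall>i\<in>{..<n}. \<omega> i \<notin> tri r X'"
        using X(2) eventually_not_in_tri by (auto simp: eventually_ball_finite)
      then obtain e where "e > 0" "\<And>X'. dist X' X < e \<Longrightarrow> \<forall>i<n. \<omega> i \<notin> tri r X'"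
        by (auto simp: eventually_nhds_metric)
      moreover obtain X' where "X' \<in> D" "dist X' X < e"
        using closure_approachable[of X D] D(3) X(1) \<open>e > 0\<close> by blast
      ultimately show False using \<omega>(1) by blast
    qed
  qed
  also have "\<dots> \<in> sets (rgg_space n)"
    using D(1) by (intro sets.sets_Collect_countable_All' some_vertex_in_sets tri_borel)
  finally show ?thesis .
qed

section \<open>A grid net of the square\<close>

definition grid :: "real \<Rightarrow> (real \<times> real) set" where
  "grid \<delta> = (\<lambda>(i, j). (real i * \<delta>, real j * \<delta>)) ` ({0..nat \<lceil>1/\<delta>\<rceil>} \<times> {0..nat \<lceil>1/\<delta>\<rceil>})"

lemma finite_grid: "finite (grid \<delta>)"
  unfolding grid_def by simp

lemma card_grid_le:
  assumes "0 < \<delta>"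
  shows "real (card (grid \<delta>)) \<le> (1/\<delta> + 2)^2"
proof -
  have "card (grid \<delta>) \<le> (nat \<lceil>1/\<delta>\<rceil> + 1)^2"
    unfolding grid_def using card_image_le[of "{0..nat \<lceil>1/\<delta>\<rceil>} \<times> {0..nat \<lceil>1/\<delta>\<rceil>}"]
    by (simp add: card_cartesian_product power2_eq_square)
  then have "real (card (grid \<delta>)) \<le> (real (nat \<lceil>1/\<delta>\<rceil>) + 1)^2"
    by (metis of_nat_1 of_nat_add of_nat_le_iff of_nat_power)
  also have "\<dots> \<le> (1/\<delta> + 2)^2"
  proof (intro power_mono)
    have "0 \<le> 1/\<delta>" using assms by simp
    then have "0 \<le> \<lceil>1/\<delta>\<rceil>" by (metis ceiling_mono ceiling_zero)
    then have "real (nat \<lceil>1/\<delta>\<rceil>) = of_int \<lceil>1/\<delta>\<rceil>" by (rule of_nat_nat)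
    then show "real (nat \<lceil>1/\<delta>\<rceil>) + 1 \<le> 1/\<delta> + 2"
      using of_int_ceiling_le_add_one[of "1/\<delta>"] by linarith
  qed simp
  finally show ?thesis .
qed

lemma grid_coord_close:
  assumes "0 < \<delta>" "0 \<le> x" "x \<le> 1"
  obtains i where "i \<in> {0..nat \<lceil>1/\<delta>\<rceil>}" "\<bar>x - real i * \<delta>\<bar> \<le> \<delta>/2"
proof -
  define k where "k = \<lfloor>x/\<delta> + 1/2\<rfloor>"
  have k: "real_of_int k \<le> x/\<delta> + 1/2" "x/\<delta> + 1/2 < real_of_int k + 1"
    unfolding k_def by linarith+
  have "0 \<le> k" using assms by (simp add: k_def)
  moreover have "x/\<delta> \<le> 1/\<delta>" using assms by (simp add: divide_right_mono)
  then have "k \<le> \<lceil>1/\<delta>\<rceil>" using k by linarith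
  moreover have "\<bar>x - real_of_int k * \<delta>\<bar> \<le> \<delta>/2"
  proof -
    have "\<bar>x/\<delta> - real_of_int k\<bar> \<le> 1/2" using k by linarith
    then have "\<bar>x/\<delta> - real_of_int k\<bar> * \<delta> \<le> 1/2 * \<delta>"
      using assms(1) by (intro mult_right_mono) auto
    moreover have "x - real_of_int k * \<delta> = (x/\<delta> - real_of_int k) * \<delta>"
      using assms(1) by (simp add: field_simps)
    ultimately show ?thesis using assms(1) by (simp add: abs_mult)
  qed
  ultimately show ?thesis using that[of "nat k"] by simp
qed

lemma grid_net:
  assumes "0 < \<delta>" "X \<in> unit_sq"
  obtains Y where "Y \<in> grid \<delta>" "dist X Y \<le> \<delta>"
proof -
  obtain i where i: "i \<in> {0..nat \<lceil>1/\<delta>\<rceil>}" "\<bar>fst X - real i * \<delta>\<bar> \<le> \<delta>/2"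
    by (rule grid_coord_close[OF assms(1), of "fst X"]) (use assms(2) in \<open>auto simp: unit_sq_def\<close>)
  obtain j where j: "j \<in> {0..nat \<lceil>1/\<delta>\<rceil>}" "\<bar>snd X - real j * \<delta>\<bar> \<le> \<delta>/2"
    by (rule grid_coord_close[OF assms(1), of "snd X"]) (use assms(2) in \<open>auto simp: unit_sq_def\<close>)
  have "(real i * \<delta>, real j * \<delta>) \<in> grid \<delta>"
    unfolding grid_def using i(1) j(1) by (intro image_eqI[of _ _ "(i, j)"]) auto
  moreover have "dist X (real i * \<delta>, real j * \<delta>) \<le> \<delta>"
    using norm_Pair_le[of "fst X - real i * \<delta>" "snd X - real j * \<delta>"] i(2) j(2)
    by (cases X) (simp add: dist_norm)
  ultimately show ?thesis using that by blast
qed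

section \<open>The union bound\<close>

lemma prob_miss_probe_le:
  assumes "0 < r" "r \<le> 3/2" "admissible r X" "dist X Y \<le> r^3/(16*10^5)"
  shows "measure (rgg_space n) {\<omega> \<in> space (rgg_space n). \<forall>i<n. \<omega> i \<notin> probe r Y}
       \<le> (1 - r^5/(64*10^7))^n"
proof -
  have sub: "probe r Y \<subseteq> unit_sq" using probe_subset_tri_inter_unit_sq[OF assms] by blast
  have le1: "emeasure lborel (probe r Y) \<le> 1"
    using emeasure_mono[OF sub, of lborel] emeasure_unit_sq by simp
  then have "emeasure lborel (probe r Y) = ennreal (measure lborel (probe r Y))"
    by (intro emeasure_eq_ennreal_measure) (auto simp: top_unique)
  moreover have "ennreal (r^5/(64*10^7)) \<le> emeasure lborel (probe r Y)"
    using emeasure_probe_ge[OF assms(1) near_admissible_ne_centre[OF assms]] .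
  ultimately have "r^5/(64*10^7) \<le> measure lborel (probe r Y)" "measure lborel (probe r Y) \<le> 1"
    using le1 assms(1) by simp_all
  then have "(1 - measure lborel (probe r Y))^n \<le> (1 - r^5/(64*10^7))^n"
    by (intro power_mono) auto
  then show ?thesis by (simp add: prob_no_vertex_in[OF probe_borel sub])
qed

lemma prob_all_tri_hit_ge:
  assumes r: "0 < r" "r \<le> 3/2"
  shows "1 - real (card (grid (r^3/(16*10^5)))) * (1 - r^5/(64*10^7))^n
       \<le> measure (rgg_space n) (all_tri_hit n r)"
proof -
  interpret P: prob_space "rgg_space n" by (rule prob_space_rgg_space)
  define \<delta> where "\<delta> = r^3/(16*10^5)"
  define Net where "Net = {Y \<in> grid \<delta>. \<exists>X. admissible r X \<and> dist X Y \<le> \<delta>}"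
  define miss where "miss = (\<lambda>Y. {\<omega> \<in> space (rgg_space n). \<forall>i<n. \<omega> i \<notin> probe r Y})"
  have fin: "finite Net" using finite_grid[of \<delta>] by (simp add: Net_def)
  have miss_sets: "miss Y \<in> sets (rgg_space n)" for Y
    unfolding miss_def by (intro no_vertex_in_sets probe_borel)
  have "space (rgg_space n) - all_tri_hit n r \<subseteq> (\<Union>Y\<in>Net. miss Y)"
  proof
    fix \<omega> assume \<omega>: "\<omega> \<in> space (rgg_space n) - all_tri_hit n r"
    then obtain X where X: "admissible r X" "\<forall>i<n. \<omega> i \<notin> tri r X"
      by (auto simp: all_tri_hit_def)
    obtain Y where Y: "Y \<in> grid \<delta>" "dist X Y \<le> \<delta>"
      using grid_net[of \<delta> X] X(1) r by (auto simp: \<delta>_def admissible_def)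
    have "\<omega> \<in> miss Y"
      using probe_subset_tri_inter_unit_sq[OF r X(1) Y(2)[unfolded \<delta>_def]] X(2) \<omega>
      by (auto simp: miss_def)
    moreover have "Y \<in> Net" using X(1) Y unfolding Net_def by blast
    ultimately show "\<omega> \<in> (\<Union>Y\<in>Net. miss Y)" by blast
  qed
  then have "P.prob (space (rgg_space n) - all_tri_hit n r) \<le> P.prob (\<Union>Y\<in>Net. miss Y)"
    using miss_sets fin by (intro P.finite_measure_mono sets.finite_UN) auto
  also have "\<dots> \<le> (\<Sum>Y\<in>Net. P.prob (miss Y))"
    using miss_sets fin by (intro measure_UNION_le) auto
  also have "\<dots> \<le> (\<Sum>Y\<in>Net. (1 - r^5/(64*10^7))^n)"
    using prob_miss_probe_le[OF r] by (intro sum_mono) (auto simp: Net_def miss_def \<delta>_def)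
  also have "\<dots> \<le> real (card (grid \<delta>)) * (1 - r^5/(64*10^7))^n"
  proof -
    have "r^5 \<le> (3/2)^5" using r by (intro power_mono) auto
    then have "0 \<le> 1 - r^5/(64*10^7)" by (simp add: power_divide)
    then show ?thesis
      using finite_grid[of \<delta>] by (auto simp: Net_def intro!: mult_right_mono card_mono)
  qed
  finally show ?thesis
    using P.prob_compl[OF all_tri_hit_sets[OF r(1)]] by (simp add: \<delta>_def)
qed

lemma power_one_minus_le_inverse_cube:
  fixes a :: real
  assumes "a \<le> 1" "0 < n" "3 * ln n \<le> a * n"
  shows "(1 - a) ^ n \<le> 1 / real n ^ 3"
proof -
  have "(1 - a) ^ n \<le> exp (- a) ^ n"
    using assms(1) exp_ge_add_one_self[of "- a"] by (intro power_mono) auto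
  also have "\<dots> = exp (- (a * n))" by (simp add: exp_of_nat_mult[symmetric] mult.commute)
  also have "\<dots> \<le> exp (- (3 * ln n))" using assms(3) by simp
  also have "\<dots> = 1 / real n ^ 3"
  proof -
    have "exp (3 * ln n) = exp (ln (real n ^ 3))" using assms(2) by (simp add: ln_realpow)
    then show ?thesis using assms(2) by (simp add: exp_minus inverse_eq_divide)
  qed
  finally show ?thesis .
qed

lemma card_grid_le_square:
  assumes "0 < r" "r \<le> 3/2" "1 \<le> r^5 * real n"
  shows "real (card (grid (r^3/(16*10^5)))) \<le> (4 * 10^6 * real n)^2"
proof -
  have n: "1 \<le> real n" using assms by (cases n) auto
  have "r^2 \<le> (3/2)^2" using assms by (intro power_mono) auto
  then have "r^3 * r^2 \<le> r^3 * (9/4)"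
    using assms by (intro mult_left_mono) (auto simp: power_divide)
  then have "r^5 \<le> r^3 * (9/4)" by (simp flip: power_add)
  then have "1 \<le> r^3 * (9/4) * real n"
    using assms(3) n by (meson mult_right_mono of_nat_0_le_iff order_trans)
  then have "1/(r^3/1600000) \<le> 3600000 * real n"
    using assms(1) by (simp add: field_simps)
  then have "1/(r^3/1600000) + 2 \<le> 4000000 * real n" using n by linarith
  then have "1/(r^3/(16*10^5)) + 2 \<le> 4 * 10^6 * real n" by simp
  then have "(1/(r^3/(16*10^5)) + 2)^2 \<le> (4 * 10^6 * real n)^2"
    using assms(1) by (intro power_mono) auto
  then show ?thesis using card_grid_le[of "r^3/(16*10^5)"] assms(1) by simp
qed

lemma measure_all_tri_hit_ge:
  assumes n: "3 \<le> n" and r: "192 * 10^7 * ln (real n) / real n < r ^ 5"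
  shows "1 - 16 * 10^12 / real n \<le> measure (rgg_space n) (all_tri_hit n r)"
proof -
  interpret P: prob_space "rgg_space n" by (rule prob_space_rgg_space)
  have n0: "0 < real n" using n by simp
  have "ln 3 \<le> ln (real n)" using n by simp
  then have "1 \<le> ln (real n)" using ln3_gt_1 by linarith
  moreover have r5n: "192 * 10^7 * ln (real n) < r^5 * real n"
    using r n0 by (simp add: field_simps)
  ultimately have r5n1: "1 \<le> r^5 * real n" by simp
  have r0: "0 < r"
  proof (rule ccontr)
    assume "\<not> 0 < r"
    then have "r^5 * real n \<le> 0"
      using n0 by (intro mult_nonpos_nonneg) (auto simp: power_le_zero_eq)
    then show False using r5n1 by simp
  qed
  show ?thesis
  proof (cases "r \<le> 3/2")
    case False
    then have "all_tri_hit n r = space (rgg_space n)"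
      using admissible_radius_le by (force simp: all_tri_hit_def)
    then show ?thesis using n0 by (simp add: P.prob_space)
  next
    case True
    have "r^5 \<le> (3/2)^5" using r0 True by (intro power_mono) auto
    then have a: "0 \<le> 1 - r^5/(64*10^7)" by (simp add: power_divide)
    then have "(1 - r^5/(64*10^7))^n \<le> 1 / real n ^ 3"
      using r5n n0 by (intro power_one_minus_le_inverse_cube) auto
    with card_grid_le_square[OF r0 True r5n1]
    have "real (card (grid (r^3/(16*10^5)))) * (1 - r^5/(64*10^7))^n
        \<le> (4 * 10^6 * real n)^2 * (1 / real n ^ 3)"
      using a by (intro mult_mono) auto
    also have "\<dots> = 16 * 10^12 / real n"
      using n0 by (simp add: power2_eq_square power3_eq_cube field_simps)
    finally show ?thesis using prob_all_tri_hit_ge[OF r0 True, of n] by simp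
  qed
qed

theorem lemma2p4:
  shows "\<exists>c>0. \<forall>r :: nat \<Rightarrow> real.
           (\<forall>\<^sub>F n in sequentially. r n ^ 5 > c * ln (real n) / real n) \<longrightarrow>
           ((\<lambda>n. measure (rgg_space n)
                 {\<omega> \<in> space (rgg_space n).
                    \<forall>X. admissible (r n) X \<longrightarrow> (\<exists>i<n. \<omega> i \<in> tri (r n) X)})
             \<longlongrightarrow> 1) sequentially"
proof (intro exI[of _ "192 * 10^7"] conjI allI impI)
  fix r :: "nat \<Rightarrow> real"
  assume r: "\<forall>\<^sub>F n in sequentially. r n ^ 5 > 192 * 10^7 * ln (real n) / real n"
  have "(\<lambda>n. measure (rgg_space n) (all_tri_hit n (r n))) \<longlonglongrightarrow> 1"
  proof (rule tendsto_sandwich)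
    show "\<forall>\<^sub>F n in sequentially. 1 - 16 * 10^12 / real n \<le> measure (rgg_space n) (all_tri_hit n (r n))"
      using r eventually_ge_at_top[of 3] by eventually_elim (rule measure_all_tri_hit_ge)
    show "\<forall>\<^sub>F n in sequentially. measure (rgg_space n) (all_tri_hit n (r n)) \<le> 1"
      by (intro always_eventually allI prob_space.prob_le_1[OF prob_space_rgg_space])
    show "(\<lambda>n. 1 - 16 * 10^12 / real n) \<longlonglongrightarrow> 1"
      using tendsto_diff[OF tendsto_const lim_const_over_n[of "16 * 10^12 :: real"]] by simp
  qed simp
  then show "((\<lambda>n. measure (rgg_space n)
                 {\<omega> \<in> space (rgg_space n).
                    \<forall>X. admissible (r n) X \<longrightarrow> (\<exists>i<n. \<omega> i \<in> tri (r n) X)}) \<longlongrightarrow> 1) sequentially"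
    by (simp add: all_tri_hit_def)
qed simp

end
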